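(* For every integer $n\ge 3$, $A'_n\equiv 0\pmod{24}$.
   Context: For $m\in\mathbb{N}$, $A_m=\sum_{k=0}^m\binom{m}{k}^2\binom{m+k}{k}^2$ (Apéry numbers), and $A'_n=\sum_{k=0}^n\binom{n}{k}A_k$ is its binomial transform. *)

theory Defs
  imports Main
begin

definition apery :: "nat \<Rightarrow> nat" where
  "apery m = (\<Sum>k\<le>m. (m choose k)^2 * ((m + k) choose k)^2)"

definition apery_bt :: "nat \<Rightarrow> nat" where
  "apery_bt n = (\<Sum>k\<le>n. (n choose k) * apery k)"

end

theory Submission
  imports Defs "HOL-Number_Theory.Cong" "HOL-Computational_Algebra.Primes"
begin

text \<open>
  Modulo 24 an Apery number depends only on the parity of its index:
  \<open>A\<^sub>k \<equiv> 3 - 2(-1)\<^sup>k\<close>. Modulo 3 this follows from the Lucas property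
  \<open>A\<^sub>p\<^sub>m\<^sub>+\<^sub>d \<equiv> A\<^sub>m A\<^sub>d (mod p)\<close>, a consequence of Lucas' theorem, together with
  \<open>A\<^sub>0 = 1\<close>, \<open>A\<^sub>1 = 5\<close>, \<open>A\<^sub>2 = 73\<close>. Modulo 8, each product
  \<open>b\<^sub>j = C(k,j) C(k+j,j)\<close> with \<open>j > 0\<close> is even, so \<open>b\<^sub>j\<^sup>2 \<equiv> 2 b\<^sub>j\<close> and
  \<open>A\<^sub>k \<equiv> 2 D\<^sub>k - 1\<close> for the central Delannoy number \<open>D\<^sub>k = \<Sum> b\<^sub>j\<close>; the identity
  \<open>D\<^sub>k = \<Sum> C(k,i)\<^sup>2 2\<^sup>k\<^sup>-\<^sup>i\<close> gives \<open>D\<^sub>k \<equiv> 1 + 2k\<^sup>2 (mod 4)\<close>.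
  Consequently \<open>A'\<^sub>n \<equiv> 3\<cdot>2\<^sup>n - 2\<Sum>(-1)\<^sup>k C(n,k) = 3\<cdot>2\<^sup>n \<equiv> 0 (mod 24)\<close> for \<open>n \<ge> 3\<close>.
\<close>

lemma prime_choose_cong:
  fixes p :: nat
  assumes "prime p"
  shows "[p choose k = of_bool (k = 0) + of_bool (k = p)] (mod p)"
proof -
  have "p \<noteq> 0" using assms by auto
  consider "k = 0" | "k = p" | "0 < k" "k < p" | "p < k" by linarith
  then show ?thesis
  proof cases
    case 4
    then show ?thesis by (simp add: binomial_eq_0)
  next
    case 3
    then have "p dvd p choose k" using assms by (intro dvd_choose_prime) auto
    then show ?thesis using 3 by (simp add: cong_0_iff)
  qed (use \<open>p \<noteq> 0\<close> in auto)
qed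

lemma choose_add_prime_cong:
  fixes p :: nat
  assumes "prime p"
  shows "[(n + p) choose q = (n choose q) + (if p \<le> q then n choose (q - p) else 0)] (mod p)"
proof -
  have "(n + p) choose q = (\<Sum>k\<le>q. (p choose k) * (n choose (q - k)))"
    using vandermonde[of p n q] by (simp add: add.commute)
  also have "[\<dots> = (\<Sum>k\<le>q. (of_bool (k = 0) + of_bool (k = p)) * (n choose (q - k)))] (mod p)"
    by (intro cong_sum cong_mult prime_choose_cong assms cong_refl)
  also have "(\<Sum>k\<le>q. (of_bool (k = 0) + of_bool (k = p)) * (n choose (q - k)))
      = (n choose q) + (if p \<le> q then n choose (q - p) else 0)"
  proof -
    have "{..q} \<inter> {k. k = 0} = {0}" "{..q} \<inter> {k. k = p} = (if p \<le> q then {p} else {})"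
      by auto
    then show ?thesis by (simp add: distrib_right sum.distrib)
  qed
  finally show ?thesis .
qed

lemma lucas_choose_digit:
  fixes p :: nat
  assumes "prime p" "b < p"
  shows "[(p * a + b) choose q = (a choose (q div p)) * (b choose (q mod p))] (mod p)"
proof (induction a arbitrary: q)
  case 0
  show ?case
  proof (cases "q < p")
    case False
    then have "q div p \<noteq> 0" using \<open>b < p\<close> by (simp add: div_eq_0_iff)
    then show ?thesis using \<open>b < p\<close> False by (simp add: binomial_eq_0)
  qed simp
next
  case (Suc a)
  have "p * Suc a + b = (p * a + b) + p" by simp
  then have "[(p * Suc a + b) choose q
      = ((p * a + b) choose q) + (if p \<le> q then (p * a + b) choose (q - p) else 0)] (mod p)"
    by (simp only: choose_add_prime_cong[OF \<open>prime p\<close>])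
  also have "[((p * a + b) choose q) + (if p \<le> q then (p * a + b) choose (q - p) else 0)
      = (a choose (q div p)) * (b choose (q mod p))
      + (if p \<le> q then (a choose ((q - p) div p)) * (b choose ((q - p) mod p)) else 0)] (mod p)"
    by (intro cong_add Suc.IH) (simp add: Suc.IH)
  also have "(a choose (q div p)) * (b choose (q mod p))
      + (if p \<le> q then (a choose ((q - p) div p)) * (b choose ((q - p) mod p)) else 0)
      = (Suc a choose (q div p)) * (b choose (q mod p))"
  proof (cases "p \<le> q")
    case True
    then have "q div p = Suc ((q - p) div p)" "(q - p) mod p = q mod p"
      using \<open>b < p\<close> by (simp_all add: le_div_geq le_mod_geq)
    then show ?thesis using True by (simp add: algebra_simps)
  qed simp
  finally show ?case .
qed

theorem lucas_choose:
  fixes p :: nat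
  assumes "prime p"
  shows "[n choose q = (n div p choose (q div p)) * (n mod p choose (q mod p))] (mod p)"
  using lucas_choose_digit[OF assms, of "n mod p" "n div p" q] assms
  by (simp add: prime_gt_0_nat)

lemma sum_lessThan_mult_nat:
  fixes k :: nat
  shows "(\<Sum>j < n * k. g j) = (\<Sum>i<n. \<Sum>e<k. g (k * i + e))"
proof -
  have "(\<Sum>j\<in>{i * k..<i * k + k}. g j) = (\<Sum>e<k. g (k * i + e))" for i
    using sum.shift_bounds_nat_ivl[of g 0 "i * k" k]
    by (simp add: atLeast0LessThan algebra_simps)
  then show ?thesis using sum.nat_group[of g k n] by simp
qed

definition apery_binom :: "nat \<Rightarrow> nat \<Rightarrow> nat" where
  "apery_binom n k = (n choose k) * ((n + k) choose k)"

lemma apery_eq_sum_apery_binom: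
  assumes "n < N"
  shows "apery n = (\<Sum>k<N. apery_binom n k ^ 2)"
proof -
  have "apery n = (\<Sum>k\<le>n. apery_binom n k ^ 2)"
    by (simp add: apery_def apery_binom_def power_mult_distrib)
  also have "\<dots> = (\<Sum>k<N. apery_binom n k ^ 2)"
    by (rule sum.mono_neutral_left) (use assms in \<open>auto simp: apery_binom_def\<close>)
  finally show ?thesis .
qed

lemma apery_binom_lucas:
  fixes p :: nat
  assumes p: "prime p" and "d < p" "e < p"
  shows "[apery_binom (p * m + d) (p * i + e) = apery_binom m i * apery_binom d e] (mod p)"
proof -
  define s where "s = d + e"
  have "p > 0" using \<open>d < p\<close> by simp
  have top: "[(p * m + d) choose (p * i + e) = (m choose i) * (d choose e)] (mod p)"
    using lucas_choose_digit[OF p \<open>d < p\<close>, of m "p * i + e"] \<open>e < p\<close> by simp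
  have "p * m + d + (p * i + e) = s + p * (m + i)" by (simp add: s_def algebra_simps)
  then have "(p * m + d + (p * i + e)) div p = m + i + s div p"
       "(p * m + d + (p * i + e)) mod p = s mod p"
    using \<open>p > 0\<close> by simp_all
  then have bottom: "[(p * m + d + (p * i + e)) choose (p * i + e)
      = ((m + i + s div p) choose i) * (s mod p choose e)] (mod p)"
    using lucas_choose[OF p, of "p * m + d + (p * i + e)" "p * i + e"] \<open>e < p\<close> by simp
  have digit: "[s choose e = s mod p choose e] (mod p)"
    using lucas_choose[OF p, of s e] \<open>e < p\<close> by simp
  \<comment> \<open>a carry in \<open>d + e\<close> kills the factor \<open>s mod p choose e\<close>, since then \<open>s mod p = s - p < e\<close>\<close>
  have carry: "((m + i + s div p) choose i) * (s mod p choose e) = ((m + i) choose i) * (s mod p choose e)"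
  proof (cases "s < p")
    case False
    then have "s mod p < e" using \<open>d < p\<close> \<open>e < p\<close> by (simp add: s_def le_mod_geq)
    then show ?thesis by simp
  qed simp
  have "[apery_binom (p * m + d) (p * i + e)
      = ((m choose i) * (d choose e)) * (((m + i) choose i) * (s mod p choose e))] (mod p)"
    unfolding apery_binom_def carry[symmetric] by (intro cong_mult top bottom)
  moreover have "[apery_binom m i * apery_binom d e
      = ((m choose i) * ((m + i) choose i)) * ((d choose e) * (s mod p choose e))] (mod p)"
    unfolding apery_binom_def s_def[symmetric] by (intro cong_mult cong_refl digit)
  ultimately show ?thesis by (simp add: cong_def ac_simps)
qed

lemma apery_lucas:
  fixes p :: nat
  assumes p: "prime p" and "d < p"
  shows "[apery (p * m + d) = apery m * apery d] (mod p)"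
proof -
  have "apery (p * m + d) = (\<Sum>j < (m + 1) * p. apery_binom (p * m + d) j ^ 2)"
    using \<open>d < p\<close> by (intro apery_eq_sum_apery_binom) simp
  also have "\<dots> = (\<Sum>i < m + 1. \<Sum>e < p. apery_binom (p * m + d) (p * i + e) ^ 2)"
    by (rule sum_lessThan_mult_nat)
  also have "[\<dots> = (\<Sum>i < m + 1. \<Sum>e < p. (apery_binom m i * apery_binom d e) ^ 2)] (mod p)"
    by (intro cong_sum cong_pow apery_binom_lucas p \<open>d < p\<close>) simp
  also have "(\<Sum>i < m + 1. \<Sum>e < p. (apery_binom m i * apery_binom d e) ^ 2)
      = (\<Sum>i < m + 1. apery_binom m i ^ 2) * (\<Sum>e < p. apery_binom d e ^ 2)"
    by (simp only: power_mult_distrib sum_product)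
  also have "\<dots> = apery m * apery d"
    using apery_eq_sum_apery_binom[of m "m + 1"] apery_eq_sum_apery_binom[OF \<open>d < p\<close>] by simp
  finally show ?thesis .
qed

lemma apery_cong_3: "[int (apery k) = (-1) ^ k] (mod 3)"
proof (induction k rule: less_induct)
  case (less k)
  show ?case
  proof (cases "k < 3")
    case True
    then consider "k = 0" | "k = 1" | "k = 2" by linarith
    then show ?thesis
      by cases (simp_all add: apery_def eval_nat_numeral cong_def)
  next
    case False
    define m d where "m = k div 3" and "d = k mod 3"
    have k: "k = 3 * m + d" and "d < 3" by (simp_all add: m_def d_def)
    have "m < k" "d < k" using False by (simp_all add: m_def d_def)
    have "[int (apery k) = int (apery m) * int (apery d)] (mod 3)"
      using apery_lucas[of 3 d m] \<open>d < 3\<close> unfolding k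
      by (simp add: cong_int_iff[symmetric])
    also have "[int (apery m) * int (apery d) = (-1) ^ m * (-1) ^ d] (mod 3)"
      using less.IH \<open>m < k\<close> \<open>d < k\<close> by (intro cong_mult) auto
    also have "(-1) ^ m * (-1) ^ d = ((-1) ^ k :: int)"
      unfolding k by (simp add: power_add power_mult)
    finally show ?thesis .
  qed
qed

lemma even_central_binomial:
  assumes "0 < j"
  shows "even ((2 * j) choose j)"
proof -
  obtain c where j: "j = Suc c" using assms by (cases j) auto
  have "(2 * j) choose j = (Suc (2 * c) choose c) + (Suc (2 * c) choose Suc c)"
    by (simp add: j)
  moreover have "Suc (2 * c) choose Suc c = Suc (2 * c) choose c"
    using binomial_symmetric[of "Suc c" "Suc (2 * c)"] by simp
  ultimately show ?thesis by simp
qed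

lemma even_apery_binom:
  assumes "0 < j"
  shows "even (apery_binom k j)"
proof (cases "j \<le> k")
  case True
  have "apery_binom k j = ((k + j) choose (2 * j)) * ((2 * j) choose j)"
    using choose_mult[of j "2 * j" "k + j"] True by (simp add: apery_binom_def mult.commute)
  then show ?thesis using even_central_binomial[OF assms] by simp
qed (simp add: apery_binom_def binomial_eq_0)

lemma even_square_cong_double:
  fixes b :: int
  assumes "even b"
  shows "[b ^ 2 = 2 * b] (mod 8)"
proof -
  obtain c where b: "b = 2 * c" using assms by (rule evenE)
  have "even (c * (c - 1))" by simp
  then obtain t where "c * (c - 1) = 2 * t" by (rule evenE)
  then have "b ^ 2 - 2 * b = 8 * t" by (simp add: b power2_eq_square algebra_simps)
  then show ?thesis by (simp add: cong_iff_dvd_diff)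
qed

definition central_delannoy :: "nat \<Rightarrow> nat" where
  "central_delannoy k = (\<Sum>j\<le>k. apery_binom k j)"

lemma apery_cong_central_delannoy:
  "[int (apery k) = 2 * int (central_delannoy k) - 1] (mod 8)"
proof -
  have "int (apery k) = (\<Sum>j\<le>k. int (apery_binom k j) ^ 2)"
    using apery_eq_sum_apery_binom[of k "Suc k"] by (simp add: lessThan_Suc_atMost)
  also have "[\<dots> = (\<Sum>j\<le>k. 2 * int (apery_binom k j) - of_bool (j = 0))] (mod 8)"
  proof (rule cong_sum)
    fix j
    show "[int (apery_binom k j) ^ 2 = 2 * int (apery_binom k j) - of_bool (j = 0)] (mod 8)"
      using even_square_cong_double[of "int (apery_binom k j)"] even_apery_binom[of j k]
      by (cases "j = 0") (simp_all add: apery_binom_def cong_def)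
  qed
  also have "(\<Sum>j\<le>k. 2 * int (apery_binom k j) - of_bool (j = 0)) = 2 * int (central_delannoy k) - 1"
    by (simp add: central_delannoy_def sum_subtractf sum_distrib_left)
  finally show ?thesis .
qed

lemma choose_add_eq_sum_choose_mult:
  "(m + n) choose n = (\<Sum>i\<le>m. (m choose i) * (n choose i))"
proof -
  have "(m + n) choose n = (\<Sum>i\<le>n. (m choose i) * (n choose i))"
    using vandermonde[of m n n]
    by (metis (no_types, lifting) atMost_iff binomial_symmetric sum.cong)
  also have "\<dots> = (\<Sum>i\<le>m + n. (m choose i) * (n choose i))"
    by (rule sum.mono_neutral_left) auto
  also have "\<dots> = (\<Sum>i\<le>m. (m choose i) * (n choose i))"
    by (rule sum.mono_neutral_right) auto
  finally show ?thesis .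
qed

lemma sum_choose_mult_choose:
  "(\<Sum>j\<le>k. (k choose j) * (j choose i)) = (k choose i) * 2 ^ (k - i)"
proof (cases "i \<le> k")
  case True
  have "(\<Sum>j\<le>k. (k choose j) * (j choose i)) = (\<Sum>j=i..k. (k choose j) * (j choose i))"
    by (rule sum.mono_neutral_right) auto
  also have "\<dots> = (\<Sum>j=i..k. (k choose i) * ((k - i) choose (j - i)))"
    by (rule sum.cong) (auto simp: choose_mult)
  also have "\<dots> = (k choose i) * (\<Sum>j=i..k. (k - i) choose (j - i))"
    by (simp add: sum_distrib_left)
  also have "(\<Sum>j=i..k. (k - i) choose (j - i)) = (\<Sum>t\<le>k - i. (k - i) choose t)"
    using sum.atLeastAtMost_shift_0[OF True, of "\<lambda>j. (k - i) choose (j - i)"]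
    by (simp add: atLeast0AtMost comp_def)
  finally show ?thesis by (simp add: choose_row_sum)
qed (simp add: binomial_eq_0)

lemma central_delannoy_eq:
  "central_delannoy k = (\<Sum>i\<le>k. (k choose i) ^ 2 * 2 ^ (k - i))"
proof -
  have "apery_binom k j = (\<Sum>i\<le>k. (k choose i) * ((k choose j) * (j choose i)))" for j
    unfolding apery_binom_def choose_add_eq_sum_choose_mult by (simp add: sum_distrib_left ac_simps)
  then have "central_delannoy k = (\<Sum>j\<le>k. \<Sum>i\<le>k. (k choose i) * ((k choose j) * (j choose i)))"
    by (simp add: central_delannoy_def)
  also have "\<dots> = (\<Sum>i\<le>k. (k choose i) * (\<Sum>j\<le>k. (k choose j) * (j choose i)))"
    by (subst sum.swap) (simp add: sum_distrib_left)
  finally show ?thesis by (simp add: sum_choose_mult_choose power2_eq_square mult.assoc)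
qed

lemma central_delannoy_cong_4: "[central_delannoy k = 1 + 2 * k ^ 2] (mod 4)"
proof (cases k)
  case (Suc m)
  define f where "f i = (k choose i) ^ 2 * 2 ^ (k - i)" for i
  have "central_delannoy k = (\<Sum>i<m. f i) + f m + f k"
    by (simp add: central_delannoy_eq f_def Suc lessThan_Suc_atMost[symmetric])
  moreover have "f m = 2 * k ^ 2" "f k = 1"
    by (simp_all add: f_def Suc)
  moreover have "4 dvd f i" if "i < m" for i
  proof -
    have "(2::nat) ^ 2 dvd 2 ^ (k - i)"
      using that by (intro le_imp_power_dvd) (simp add: Suc)
    then show ?thesis by (simp add: f_def)
  qed
  then have "4 dvd (\<Sum>i<m. f i)" by (auto intro: dvd_sum)
  ultimately show ?thesis by (auto simp: cong_def elim!: dvdE)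
qed (simp add: central_delannoy_def apery_binom_def)

lemma apery_cong_8: "[int (apery k) = 3 - 2 * (-1) ^ k] (mod 8)"
proof -
  have "[int (central_delannoy k) = 1 + 2 * int k ^ 2] (mod 4)"
    using central_delannoy_cong_4[of k] by (simp flip: cong_int_iff)
  then obtain t where t: "int (central_delannoy k) - (1 + 2 * int k ^ 2) = 4 * t"
    by (auto simp: cong_iff_dvd_diff elim!: dvdE)
  note apery_cong_central_delannoy[of k]
  also have "2 * int (central_delannoy k) - 1 = 1 + 4 * int k ^ 2 + 8 * t"
    using t by simp
  also have "[1 + 4 * int k ^ 2 + 8 * t = 1 + 4 * int k ^ 2] (mod 8)"
    by (simp add: cong_iff_dvd_diff)
  also have "[1 + 4 * int k ^ 2 = 3 - 2 * (-1) ^ k] (mod 8)"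
  proof (cases "even k")
    case True
    then obtain u where "k = 2 * u" by (rule evenE)
    then show ?thesis by (simp add: cong_iff_dvd_diff power2_eq_square)
  next
    case False
    then obtain u where u: "k = 2 * u + 1" by (rule oddE)
    have "1 + 4 * int k ^ 2 - (3 - 2 * (-1) ^ k) = 8 * (2 * int u * int u + 2 * int u)"
      using False by (simp add: u power2_eq_square algebra_simps)
    then show ?thesis by (simp add: cong_iff_dvd_diff)
  qed
  finally show ?thesis .
qed

lemma apery_cong_24: "[int (apery k) = 3 - 2 * (-1) ^ k] (mod 24)"
proof -
  have "[(-1) ^ k = 3 - 2 * (-1) ^ k :: int] (mod 3)"
    by (simp add: cong_iff_dvd_diff)
  with apery_cong_3 have "[int (apery k) = 3 - 2 * (-1) ^ k] (mod 3)"
    by (rule cong_trans)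
  with apery_cong_8 have "[int (apery k) = 3 - 2 * (-1) ^ k] (mod 8 * 3)"
    by (rule coprime_cong_mult) (simp add: coprime_iff_gcd_eq_1 gcd_non_0_int)
  then show ?thesis by simp
qed

theorem lemma4p2:
  fixes n :: nat
  assumes "n \<ge> 3"
  shows "(24::nat) dvd apery_bt n"
proof -
  have "int (apery_bt n) = (\<Sum>k\<le>n. int (n choose k) * int (apery k))"
    by (simp add: apery_bt_def)
  also have "[\<dots> = (\<Sum>k\<le>n. int (n choose k) * (3 - 2 * (-1) ^ k))] (mod 24)"
    by (intro cong_sum cong_mult cong_refl apery_cong_24)
  also have "(\<Sum>k\<le>n. int (n choose k) * (3 - 2 * (-1) ^ k))
      = 3 * (\<Sum>k\<le>n. int (n choose k)) - 2 * (\<Sum>k\<le>n. (-1) ^ k * int (n choose k))"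
    by (simp add: algebra_simps sum_subtractf sum_distrib_left)
  also have "\<dots> = 3 * 2 ^ n"
    using choose_row_sum[of n] choose_alternating_sum[of n] assms
    by (simp flip: of_nat_sum)
  also have "[3 * 2 ^ n = 0 :: int] (mod 24)"
    using mult_dvd_mono[OF dvd_refl le_imp_power_dvd[OF assms], of 3 "2::int"]
    by (simp add: cong_0_iff)
  finally have "int 24 dvd int (apery_bt n)"
    by (simp add: cong_0_iff)
  then show ?thesis by (simp only: int_dvd_int_iff)
qed

end
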